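(* Let $I$ be a parallel offering instance with $k$ identical positions ($p_{ij}=p_i$, $v_{ij}=v_i$) and $T$ rounds, and let $I'$ be the sequential offering instance with the same candidates, the same $k$, and a budget of $kT$ offers. Then the policy $\mathsf{ALG}_{\mathtt{par}}$ satisfies $R_{\mathsf{ALG}_{\mathtt{par}}}(I)\ge(1-1/e)\,\mathsf{OPT}_{\mathtt{seq}}(I')$.
   Context: Parallel offering: in each of $T$ rounds the firm may send at most one offer per unfilled position, each candidate receives at most one offer overall, candidate $i$ accepts an offer with probability $p_i$ (independently across candidates) and then fills that position, earning $v_i$. Sequential offering: offers are sent one at a time, at most $kT$ offers, each candidate at most one offer, accepting candidates are hired and at most $k$ can be hired; $\mathsf{OPT}_{\mathtt{seq}}(I')$ is the supremum of expected total value over all adaptive sequential policies. $\mathsf{ALG}_{\mathtt{par}}$: solve $\mathrm{LP}_{\mathtt{par}}(I)$ (maximize $\sum_{j,i}v_{ij}p_{ij}y_{ij}$ s.t. $\sum_iy_{ij}\le T$, $\sum_ip_{ij}y_{ij}\le1$ for each $j$, $\sum_jy_{ij}\le1$ for each $i$, $0\le y\le1$), round the optimal $y$ with the Gandhi–Khuller–Parthasarathy–Srinivasan dependent rounding on the candidate–position bipartite graph (outputs $Y\in\{0,1\}^{n\times k}$ with $\mathbb{E}Y_{ij}=y_{ij}$, vertex degrees rounded to floor or ceiling of fractional degrees, and negative correlation of edges at each vertex), put $i$ in list $L_j$ iff $Y_{ij}=1$, and for each position offer the candidates of its list in decreasing order of value, in parallel, until the position is filled. *)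

theory Defs
  imports "HOL-Probability.Probability"
begin

text \<open>An adaptive (deterministic) sequential policy is a decision tree:
  Offer i a r offers to candidate i, continues with a if i accepts and
  with r if i rejects.  Randomised policies cannot do better than the best
  deterministic one, so the supremum is taken over these trees.\<close>

datatype policy = Stop | Offer nat policy policy

fun seq_val :: "(nat \<Rightarrow> real) \<Rightarrow> (nat \<Rightarrow> real) \<Rightarrow> policy \<Rightarrow> real" where
  "seq_val p v Stop = 0"
| "seq_val p v (Offer i a r) = p i * (v i + seq_val p v a) + (1 - p i) * seq_val p v r"

text \<open>Feasibility with n candidates 0..n-1, set of already contacted candidates S,
  remaining offer budget b and remaining number of hires h.\<close>
fun seq_feasible :: "nat \<Rightarrow> nat set \<Rightarrow> nat \<Rightarrow> nat \<Rightarrow> policy \<Rightarrow> bool" where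
  "seq_feasible n S b h Stop = True"
| "seq_feasible n S b h (Offer i a r) =
     (i < n \<and> i \<notin> S \<and> 0 < b \<and> 0 < h \<and>
      seq_feasible n (insert i S) (b - 1) (h - 1) a \<and>
      seq_feasible n (insert i S) (b - 1) h r)"

definition opt_seq :: "nat \<Rightarrow> nat \<Rightarrow> nat \<Rightarrow> (nat \<Rightarrow> real) \<Rightarrow> (nat \<Rightarrow> real) \<Rightarrow> real" where
  "opt_seq n k B p v = Sup {seq_val p v \<pi> | \<pi>. seq_feasible n {} B k \<pi>}"

definition lp_par_feasible ::
  "nat \<Rightarrow> nat \<Rightarrow> nat \<Rightarrow> (nat \<Rightarrow> real) \<Rightarrow> (nat \<Rightarrow> nat \<Rightarrow> real) \<Rightarrow> bool" where
  "lp_par_feasible n k T p y \<longleftrightarrow>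
     (\<forall>i<n. \<forall>j<k. 0 \<le> y i j \<and> y i j \<le> 1) \<and>
     (\<forall>j<k. (\<Sum>i<n. y i j) \<le> real T) \<and>
     (\<forall>j<k. (\<Sum>i<n. p i * y i j) \<le> 1) \<and>
     (\<forall>i<n. (\<Sum>j<k. y i j) \<le> 1)"

definition lp_par_obj ::
  "nat \<Rightarrow> nat \<Rightarrow> (nat \<Rightarrow> real) \<Rightarrow> (nat \<Rightarrow> real) \<Rightarrow> (nat \<Rightarrow> nat \<Rightarrow> real) \<Rightarrow> real" where
  "lp_par_obj n k p v y = (\<Sum>j<k. \<Sum>i<n. v i * p i * y i j)"

definition lp_par_optimal ::
  "nat \<Rightarrow> nat \<Rightarrow> nat \<Rightarrow> (nat \<Rightarrow> real) \<Rightarrow> (nat \<Rightarrow> real) \<Rightarrow> (nat \<Rightarrow> nat \<Rightarrow> real) \<Rightarrow> bool" where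
  "lp_par_optimal n k T p v y \<longleftrightarrow>
     lp_par_feasible n k T p y \<and>
     (\<forall>y'. lp_par_feasible n k T p y' \<longrightarrow> lp_par_obj n k p v y' \<le> lp_par_obj n k p v y)"

text \<open>A distribution Y over 0/1 matrices Z (Z i j = candidate i in list of position j)
  has the three GKPS properties with respect to the fractional y:
  marginals, degree preservation, negative correlation at every vertex.\<close>
definition gkps_rounding ::
  "nat \<Rightarrow> nat \<Rightarrow> (nat \<Rightarrow> nat \<Rightarrow> real) \<Rightarrow> (nat \<Rightarrow> nat \<Rightarrow> bool) pmf \<Rightarrow> bool" where
  "gkps_rounding n k y Y \<longleftrightarrow>
     (\<forall>i<n. \<forall>j<k. measure_pmf.prob Y {Z. Z i j} = y i j) \<and>
     (\<forall>Z\<in>set_pmf Y.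
        (\<forall>i<n. real (card {j. j < k \<and> Z i j}) \<in>
                {of_int \<lfloor>\<Sum>j<k. y i j\<rfloor>, of_int \<lceil>\<Sum>j<k. y i j\<rceil>}) \<and>
        (\<forall>j<k. real (card {i. i < n \<and> Z i j}) \<in>
                {of_int \<lfloor>\<Sum>i<n. y i j\<rfloor>, of_int \<lceil>\<Sum>i<n. y i j\<rceil>})) \<and>
     (\<forall>i<n. \<forall>S\<subseteq>{..<k}. \<forall>b.
        measure_pmf.prob Y {Z. \<forall>j\<in>S. Z i j = b} \<le> (\<Prod>j\<in>S. measure_pmf.prob Y {Z. Z i j = b})) \<and>
     (\<forall>j<k. \<forall>S\<subseteq>{..<n}. \<forall>b.
        measure_pmf.prob Y {Z. \<forall>i\<in>S. Z i j = b} \<le> (\<Prod>i\<in>S. measure_pmf.prob Y {Z. Z i j = b}))"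

definition offer_order :: "(nat \<Rightarrow> real) \<Rightarrow> nat set \<Rightarrow> nat list" where
  "offer_order v L = sort_key (\<lambda>i. - v i) (sorted_list_of_set L)"

text \<open>Expected value obtained by one position offering the candidates of a list in
  order, one per round, until one accepts.\<close>
fun pos_val :: "(nat \<Rightarrow> real) \<Rightarrow> (nat \<Rightarrow> real) \<Rightarrow> nat list \<Rightarrow> real" where
  "pos_val p v [] = 0"
| "pos_val p v (i # xs) = p i * v i + (1 - p i) * pos_val p v xs"

text \<open>Total expected reward for fixed lists Z, positions 0..k-1, T rounds.
  (Lists are disjoint by the degree property, so positions do not interact.)\<close>
definition alg_par_reward ::
  "nat \<Rightarrow> nat \<Rightarrow> nat \<Rightarrow> (nat \<Rightarrow> real) \<Rightarrow> (nat \<Rightarrow> real) \<Rightarrow> (nat \<Rightarrow> nat \<Rightarrow> bool) \<Rightarrow> real" where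
  "alg_par_reward n k T p v Z =
     (\<Sum>j<k. pos_val p v (take T (offer_order v {i. i < n \<and> Z i j})))"

end

theory Submission
  imports Defs
begin

text \<open>Any sequential policy with k hires and kT offers induces offer probabilities x with
  \<open>\<Sum> x \<le> kT\<close>, \<open>\<Sum> p x \<le> k\<close> and value \<open>\<Sum> v p x\<close>; spreading x evenly over the k
  positions gives a feasible LP point, so \<open>OPT_seq\<close> is at most the LP optimum.
  Conversely, offering a list in decreasing order of value is a sum over value thresholds of
  the gap times the probability that some listed candidate above the threshold accepts.
  Negative correlation of the rounding bounds the probability that all of them reject by
  \<open>\<Prod>(1 - p y) \<le> exp (- \<Sum> p y)\<close>, and concavity of \<open>1 - exp (- s)\<close> on [0,1] together with
  \<open>\<Sum> p y \<le> 1\<close> gives the factor \<open>1 - 1/e\<close> at every threshold.  Degree preservation keeps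
  every list within T candidates, so the truncation to T rounds loses nothing.\<close>

text \<open>\<open>x i\<close> is the probability that candidate i receives an offer; S is the set of
  candidates already contacted, b the remaining budget and h the remaining hires.\<close>

definition offer_probabilities ::
  "nat \<Rightarrow> nat set \<Rightarrow> nat \<Rightarrow> nat \<Rightarrow> (nat \<Rightarrow> real) \<Rightarrow> (nat \<Rightarrow> real) \<Rightarrow> bool" where
  "offer_probabilities n S b h p x \<longleftrightarrow>
     (\<forall>i. 0 \<le> x i \<and> x i \<le> 1) \<and> (\<forall>i\<in>S. x i = 0) \<and>
     (\<Sum>i<n. x i) \<le> real b \<and> (\<Sum>i<n. p i * x i) \<le> real h"

lemma sum_offer_mixture:
  fixes w xa xr :: "nat \<Rightarrow> real"
  assumes "i < n"
  shows "(\<Sum>t<n. w t * ((if t = i then 1 else 0) + a * xa t + c * xr t))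
           = w i + a * (\<Sum>t<n. w t * xa t) + c * (\<Sum>t<n. w t * xr t)"
proof -
  have "(\<Sum>t<n. w t * ((if t = i then 1 else 0) + a * xa t + c * xr t))
          = (\<Sum>t<n. (if t = i then w i else 0) + a * (w t * xa t) + c * (w t * xr t))"
    by (intro sum.cong) (auto simp: algebra_simps)
  then show ?thesis using assms by (simp add: sum.distrib sum_distrib_left)
qed

lemma seq_val_eq_offer_probabilities:
  assumes "seq_feasible n S b h \<pi>" and p: "\<forall>i<n. 0 \<le> p i \<and> p i \<le> 1"
  shows "\<exists>x. offer_probabilities n S b h p x \<and> seq_val p v \<pi> = (\<Sum>i<n. v i * p i * x i)"
  using assms(1)
proof (induction \<pi> arbitrary: S b h)
  case Stop
  show ?case by (rule exI[of _ "\<lambda>_. 0"]) (simp add: offer_probabilities_def)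
next
  case (Offer i a r)
  then have i: "i < n" "i \<notin> S" "0 < b" "0 < h" and pi: "0 \<le> p i" "p i \<le> 1"
    using p by auto
  obtain xa where xa: "offer_probabilities n (insert i S) (b - 1) (h - 1) p xa"
    and val_a: "seq_val p v a = (\<Sum>t<n. v t * p t * xa t)"
    using Offer.IH(1) Offer.prems by fastforce
  obtain xr where xr: "offer_probabilities n (insert i S) (b - 1) h p xr"
    and val_r: "seq_val p v r = (\<Sum>t<n. v t * p t * xr t)"
    using Offer.IH(2) Offer.prems by fastforce
  define x where "x t = (if t = i then 1 else 0) + p i * xa t + (1 - p i) * xr t" for t
  have mix: "(\<Sum>t<n. w t * x t) = w i + p i * (\<Sum>t<n. w t * xa t) + (1 - p i) * (\<Sum>t<n. w t * xr t)"
    for w using sum_offer_mixture[OF i(1)] by (simp add: x_def)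
  have "offer_probabilities n S b h p x"
    unfolding offer_probabilities_def
  proof (intro conjI allI ballI)
    fix t
    have "p i * xa t + (1 - p i) * xr t \<le> p i * 1 + (1 - p i) * 1"
      using xa xr pi unfolding offer_probabilities_def by (intro add_mono mult_left_mono) auto
    moreover have "xa i = 0" "xr i = 0" using xa xr unfolding offer_probabilities_def by auto
    ultimately show "0 \<le> x t" "x t \<le> 1"
      using xa xr pi unfolding offer_probabilities_def x_def by auto
  next
    fix t assume "t \<in> S"
    then show "x t = 0" using xa xr i unfolding offer_probabilities_def x_def by auto
  next
    have "(\<Sum>t<n. x t) \<le> 1 + p i * (real b - 1) + (1 - p i) * (real b - 1)"
      using mix[of "\<lambda>_. 1"] xa xr pi i unfolding offer_probabilities_def
      by (auto intro!: add_mono mult_left_mono)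
    then show "(\<Sum>t<n. x t) \<le> real b" by (simp add: algebra_simps)
  next
    have "(\<Sum>t<n. p t * x t) \<le> p i + p i * (real h - 1) + (1 - p i) * real h"
      using mix[of p] xa xr pi i unfolding offer_probabilities_def
      by (auto intro!: add_mono mult_left_mono)
    then show "(\<Sum>t<n. p t * x t) \<le> real h" by (simp add: algebra_simps)
  qed
  moreover have "seq_val p v (Offer i a r) = (\<Sum>t<n. v t * p t * x t)"
    using mix[of "\<lambda>t. v t * p t"] val_a val_r by (simp add: algebra_simps)
  ultimately show ?case by blast
qed

lemma opt_seq_le_lp_par_obj:
  assumes k: "1 \<le> k" and p: "\<forall>i<n. 0 \<le> p i \<and> p i \<le> 1"
    and opt: "lp_par_optimal n k T p v y"
  shows "opt_seq n k (k * T) p v \<le> lp_par_obj n k p v y"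
  unfolding opt_seq_def
proof (rule cSup_least)
  show "{seq_val p v \<pi> |\<pi>. seq_feasible n {} (k * T) k \<pi>} \<noteq> {}"
    using seq_feasible.simps(1) by blast
next
  fix z assume "z \<in> {seq_val p v \<pi> |\<pi>. seq_feasible n {} (k * T) k \<pi>}"
  then obtain \<pi> where z: "z = seq_val p v \<pi>" and feasible: "seq_feasible n {} (k * T) k \<pi>"
    by blast
  obtain x where x: "offer_probabilities n {} (k * T) k p x"
    and val: "seq_val p v \<pi> = (\<Sum>i<n. v i * p i * x i)"
    using seq_val_eq_offer_probabilities[OF feasible p] by blast
  define y' where "y' i (j::nat) = x i / real k" for i j
  have kpos: "real k > 0" using k by simp
  have "lp_par_feasible n k T p y'"
    unfolding lp_par_feasible_def
  proof (intro conjI allI impI)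
    fix i j
    show "0 \<le> y' i j" "y' i j \<le> 1"
      using x k unfolding offer_probabilities_def y'_def
      by (auto simp: divide_le_eq intro: order.trans[of _ 1])
    show "(\<Sum>i<n. y' i j) \<le> real T" "(\<Sum>i<n. p i * y' i j) \<le> 1"
      using x kpos unfolding offer_probabilities_def y'_def
      by (auto simp: sum_divide_distrib[symmetric] divide_le_eq mult.commute)
    show "(\<Sum>j<k. y' i j) \<le> 1"
      using x kpos unfolding offer_probabilities_def y'_def by simp
  qed
  then have "lp_par_obj n k p v y' \<le> lp_par_obj n k p v y"
    using opt unfolding lp_par_optimal_def by blast
  moreover have "lp_par_obj n k p v y' = seq_val p v \<pi>"
    using kpos unfolding lp_par_obj_def y'_def val by (simp add: sum_divide_distrib[symmetric])
  ultimately show "z \<le> lp_par_obj n k p v y" using z by simp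
qed

lemma pos_val_append:
  "pos_val p v (xs @ ys) = pos_val p v xs + prod_list (map (\<lambda>i. 1 - p i) xs) * pos_val p v ys"
  by (induction xs) (simp_all add: distrib_left mult.assoc add.assoc)

lemma pos_val_shift:
  "pos_val p v xs = pos_val p (\<lambda>i. v i - w) xs + w * (1 - prod_list (map (\<lambda>i. 1 - p i) xs))"
proof (induction xs)
  case (Cons i xs)
  show ?case by (simp add: Cons.IH algebra_simps)
qed simp

lemma abs_pos_val_le:
  assumes "\<forall>i\<in>set xs. 0 \<le> p i \<and> p i \<le> 1"
  shows "\<bar>pos_val p v xs\<bar> \<le> (\<Sum>i\<leftarrow>xs. \<bar>v i\<bar>)"
  using assms
proof (induction xs)
  case (Cons i xs)
  then have pi: "0 \<le> p i" "p i \<le> 1" and IH: "\<bar>pos_val p v xs\<bar> \<le> (\<Sum>i\<leftarrow>xs. \<bar>v i\<bar>)"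
    by auto
  have "\<bar>pos_val p v (i # xs)\<bar> \<le> \<bar>p i * v i\<bar> + \<bar>(1 - p i) * pos_val p v xs\<bar>"
    by (simp add: abs_triangle_ineq)
  also have "\<dots> = p i * \<bar>v i\<bar> + (1 - p i) * \<bar>pos_val p v xs\<bar>"
    using pi by (simp add: abs_mult)
  also have "\<dots> \<le> 1 * \<bar>v i\<bar> + 1 * (\<Sum>i\<leftarrow>xs. \<bar>v i\<bar>)"
    using pi IH by (intro add_mono mult_mono) auto
  finally show ?case by simp
qed simp

text \<open>The value of offering a list is unchanged when a final candidate of value 0 is appended;
  subtracting the smallest value therefore peels off one value threshold.\<close>

lemma pos_val_filter_snoc:
  assumes "distinct (xs @ [x])"
  shows "pos_val p v (filter P (xs @ [x])) =
           pos_val p (\<lambda>i. v i - v x) (filter P xs)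
           + v x * (1 - (\<Prod>i\<in>{i \<in> set (xs @ [x]). P i}. 1 - p i))"
proof -
  have "pos_val p (\<lambda>i. v i - v x) (filter P (xs @ [x])) = pos_val p (\<lambda>i. v i - v x) (filter P xs)"
    by (simp add: pos_val_append)
  moreover have "prod_list (map (\<lambda>i. 1 - p i) (filter P (xs @ [x])))
                   = (\<Prod>i\<in>{i \<in> set (xs @ [x]). P i}. 1 - p i)"
    using prod.distinct_set_conv_list[OF distinct_filter[OF assms, of P], of "\<lambda>i. 1 - p i"]
    unfolding set_filter ..
  ultimately show ?thesis using pos_val_shift[of p v "filter P (xs @ [x])" "v x"] by simp
qed

lemma integrable_measure_pmf_bounded:
  fixes f :: "'a \<Rightarrow> real"
  assumes "\<And>x. \<bar>f x\<bar> \<le> B"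
  shows "integrable (measure_pmf M) f"
  by (rule measure_pmf.integrable_const_bound[where B = B]) (auto simp: assms)

lemma integrable_pos_val:
  assumes "finite A" and "\<forall>i\<in>A. 0 \<le> p i \<and> p i \<le> 1"
    and "\<And>x. distinct (f x) \<and> set (f x) \<subseteq> A"
  shows "integrable (measure_pmf M) (\<lambda>x. pos_val p v (f x))"
proof (rule integrable_measure_pmf_bounded)
  fix x
  have "\<bar>pos_val p v (f x)\<bar> \<le> (\<Sum>i\<leftarrow>f x. \<bar>v i\<bar>)"
    using assms(2,3) by (intro abs_pos_val_le) auto
  also have "\<dots> = (\<Sum>i\<in>set (f x). \<bar>v i\<bar>)"
    using assms(3) by (simp add: sum_list_distinct_conv_sum_set)
  also have "\<dots> \<le> (\<Sum>i\<in>A. \<bar>v i\<bar>)"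
    using assms(1,3) by (intro sum_mono2) auto
  finally show "\<bar>pos_val p v (f x)\<bar> \<le> (\<Sum>i\<in>A. \<bar>v i\<bar>)" .
qed

lemma prod_indicator_disjoint:
  "finite B \<Longrightarrow> (\<Prod>i\<in>B. if i \<in> S then 0 else 1 :: real) = indicator {S. B \<inter> S = {}} S"
  by (induction B rule: finite_induct) (auto simp: indicator_def)

text \<open>Expanding the product over subsets turns it into a nonnegative combination of the
  probabilities that whole subsets are absent, to which negative correlation applies.\<close>

lemma expectation_all_reject_le_prod:
  fixes L :: "'a set pmf"
  assumes A: "finite A" and p: "\<forall>i\<in>A. 0 \<le> p i \<and> p i \<le> 1"
    and absent: "\<forall>B\<subseteq>A. measure_pmf.prob L {S. B \<inter> S = {}} \<le> (\<Prod>i\<in>B. 1 - q i)"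
  shows "measure_pmf.expectation L (\<lambda>S. \<Prod>i\<in>A \<inter> S. 1 - p i) \<le> (\<Prod>i\<in>A. 1 - p i * q i)"
proof -
  define c where "c B = (\<Prod>i\<in>B. p i) * (\<Prod>i\<in>A - B. 1 - p i)" for B
  have c_nonneg: "0 \<le> c B" if "B \<subseteq> A" for B
    unfolding c_def using p that by (intro mult_nonneg_nonneg prod_nonneg) auto
  have expand: "(\<Prod>i\<in>A. p i * f i + (1 - p i)) = (\<Sum>B\<in>Pow A. c B * (\<Prod>i\<in>B. f i))" for f
    unfolding prod_add[OF A] c_def prod.distrib by (simp only: mult_ac)
  have "(\<Prod>i\<in>A \<inter> S. 1 - p i) = (\<Sum>B\<in>Pow A. c B * indicator {S. B \<inter> S = {}} S)" for S
  proof -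
    have "(\<Prod>i\<in>A \<inter> S. 1 - p i) = (\<Prod>i\<in>A. p i * (if i \<in> S then 0 else 1) + (1 - p i))"
      unfolding prod.inter_restrict[OF A] by (intro prod.cong) auto
    also have "\<dots> = (\<Sum>B\<in>Pow A. c B * indicator {S. B \<inter> S = {}} S)"
      using A by (simp add: expand prod_indicator_disjoint finite_subset)
    finally show ?thesis .
  qed
  then have "measure_pmf.expectation L (\<lambda>S. \<Prod>i\<in>A \<inter> S. 1 - p i)
               = (\<Sum>B\<in>Pow A. c B * measure_pmf.prob L {S. B \<inter> S = {}})"
    by (simp add: Bochner_Integration.integral_sum integrable_measure_pmf_bounded[where B = 1])
  also have "\<dots> \<le> (\<Sum>B\<in>Pow A. c B * (\<Prod>i\<in>B. 1 - q i))"
    using absent c_nonneg by (intro sum_mono mult_left_mono) auto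
  also have "\<dots> = (\<Prod>i\<in>A. 1 - p i * q i)"
    by (simp add: expand[symmetric] algebra_simps)
  finally show ?thesis .
qed

lemma one_minus_exp_minus_ge:
  assumes "0 \<le> s" "s \<le> (1::real)"
  shows "(1 - 1 / exp 1) * s \<le> 1 - exp (- s)"
proof -
  have "exp ((1 - s) *\<^sub>R 0 + s *\<^sub>R (-1)) \<le> (1 - s) * exp 0 + s * exp (-1)"
    using convex_onD[OF exp_convex, of s 0 "-1"] assms by simp
  then show ?thesis by (simp add: exp_minus inverse_eq_divide algebra_simps)
qed

lemma prod_one_minus_le_exp:
  assumes "finite A" "\<forall>i\<in>A. 0 \<le> a i \<and> a i \<le> (1::real)"
  shows "(\<Prod>i\<in>A. 1 - a i) \<le> exp (- (\<Sum>i\<in>A. a i))"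
proof -
  have "(\<Prod>i\<in>A. 1 - a i) \<le> (\<Prod>i\<in>A. exp (- a i))"
    using assms(2) exp_ge_add_one_self[of "- a _"] by (intro prod_mono) auto
  also have "\<dots> = exp (- (\<Sum>i\<in>A. a i))"
    using assms(1) by (simp add: exp_sum sum_negf[symmetric])
  finally show ?thesis .
qed

lemma expectation_all_reject_le:
  fixes L :: "'a set pmf"
  assumes A: "finite A" and pq: "\<forall>i\<in>A. 0 \<le> p i \<and> p i \<le> 1 \<and> 0 \<le> q i"
    and mass: "(\<Sum>i\<in>A. p i * q i) \<le> 1"
    and absent: "\<forall>B\<subseteq>A. measure_pmf.prob L {S. B \<inter> S = {}} \<le> (\<Prod>i\<in>B. 1 - q i)"
  shows "measure_pmf.expectation L (\<lambda>S. \<Prod>i\<in>A \<inter> S. 1 - p i)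
           \<le> 1 - (1 - 1 / exp 1) * (\<Sum>i\<in>A. p i * q i)"
proof -
  have term_le: "p i * q i \<le> 1" if "i \<in> A" for i
    using member_le_sum[of i A "\<lambda>i. p i * q i"] pq mass A that by auto
  have "measure_pmf.expectation L (\<lambda>S. \<Prod>i\<in>A \<inter> S. 1 - p i) \<le> (\<Prod>i\<in>A. 1 - p i * q i)"
    using expectation_all_reject_le_prod[OF A _ absent] pq by blast
  also have "\<dots> \<le> exp (- (\<Sum>i\<in>A. p i * q i))"
    using pq term_le by (intro prod_one_minus_le_exp[OF A]) auto
  also have "\<dots> \<le> 1 - (1 - 1 / exp 1) * (\<Sum>i\<in>A. p i * q i)"
    using one_minus_exp_minus_ge[OF sum_nonneg mass] pq by auto
  finally show ?thesis .
qed

lemma expectation_pos_val_filter_ge: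
  fixes L :: "nat set pmf"
  assumes "distinct xs" and "sorted_wrt (\<lambda>a b. v b \<le> v a) xs"
    and "\<forall>i\<in>set xs. 0 \<le> v i \<and> 0 \<le> p i \<and> p i \<le> 1 \<and> 0 \<le> q i"
    and "(\<Sum>i\<in>set xs. p i * q i) \<le> 1"
    and "\<forall>B\<subseteq>set xs. measure_pmf.prob L {S. B \<inter> S = {}} \<le> (\<Prod>i\<in>B. 1 - q i)"
  shows "(1 - 1 / exp 1) * (\<Sum>i\<in>set xs. v i * p i * q i)
           \<le> measure_pmf.expectation L (\<lambda>S. pos_val p v (filter (\<lambda>i. i \<in> S) xs))"
  using assms
proof (induction xs arbitrary: v rule: rev_induct)
  case (snoc x ys)
  let ?c = "1 - 1 / exp 1 :: real"
  let ?A = "set (ys @ [x])"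
  let ?reject = "\<lambda>S. \<Prod>i\<in>?A \<inter> S. 1 - p i"
  define v' where "v' i = v i - v x" for i
  have vx: "0 \<le> v x" and pq: "\<forall>i\<in>?A. 0 \<le> p i \<and> p i \<le> 1 \<and> 0 \<le> q i"
    using snoc.prems(3) by auto
  have IH: "?c * (\<Sum>i\<in>set ys. v' i * p i * q i)
              \<le> measure_pmf.expectation L (\<lambda>S. pos_val p v' (filter (\<lambda>i. i \<in> S) ys))"
  proof (rule snoc.IH)
    show "distinct ys" using snoc.prems(1) by simp
    show "sorted_wrt (\<lambda>a b. v' b \<le> v' a) ys" "\<forall>i\<in>set ys. 0 \<le> v' i \<and> 0 \<le> p i \<and> p i \<le> 1 \<and> 0 \<le> q i"
      using snoc.prems(2,3) by (auto simp: v'_def sorted_wrt_append)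
    have "(\<Sum>i\<in>set ys. p i * q i) \<le> (\<Sum>i\<in>?A. p i * q i)"
      using pq by (intro sum_mono2) auto
    then show "(\<Sum>i\<in>set ys. p i * q i) \<le> 1" using snoc.prems(4) by linarith
    show "\<forall>B\<subseteq>set ys. measure_pmf.prob L {S. B \<inter> S = {}} \<le> (\<Prod>i\<in>B. 1 - q i)"
      using snoc.prems(5) by auto
  qed
  have "0 \<le> ?reject S \<and> ?reject S \<le> 1" for S
    using pq by (auto intro!: prod_le_1 prod_nonneg)
  then have integrable_reject: "integrable (measure_pmf L) ?reject"
    by (intro integrable_measure_pmf_bounded[where B = 1]) (simp add: abs_le_iff)
  have integrable_pos_val_ys: "integrable (measure_pmf L) (\<lambda>S. pos_val p v' (filter (\<lambda>i. i \<in> S) ys))"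
    using pq snoc.prems(1) by (intro integrable_pos_val[where A = "set ys"]) auto
  have "pos_val p v (filter (\<lambda>i. i \<in> S) (ys @ [x]))
          = pos_val p v' (filter (\<lambda>i. i \<in> S) ys) + v x * (1 - ?reject S)" for S
    unfolding v'_def Int_def by (rule pos_val_filter_snoc[OF snoc.prems(1)])
  then have expectation_split:
    "measure_pmf.expectation L (\<lambda>S. pos_val p v (filter (\<lambda>i. i \<in> S) (ys @ [x])))
       = measure_pmf.expectation L (\<lambda>S. pos_val p v' (filter (\<lambda>i. i \<in> S) ys))
         + v x * (1 - measure_pmf.expectation L ?reject)"
    using integrable_pos_val_ys integrable_reject
    by (simp del: filter_append add: Bochner_Integration.integral_add Bochner_Integration.integral_diff)
  have threshold: "?c * (\<Sum>i\<in>?A. p i * q i) \<le> 1 - measure_pmf.expectation L ?reject"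
    using expectation_all_reject_le[of ?A p q L] pq snoc.prems(4,5) by simp
  have "?c * (\<Sum>i\<in>?A. v i * p i * q i)
          = ?c * (\<Sum>i\<in>set ys. v' i * p i * q i) + v x * (?c * (\<Sum>i\<in>?A. p i * q i))"
    using snoc.prems(1)
    by (simp add: v'_def algebra_simps sum.distrib sum_subtractf sum_distrib_left)
  also have "\<dots> \<le> measure_pmf.expectation L (\<lambda>S. pos_val p v' (filter (\<lambda>i. i \<in> S) ys))
                   + v x * (1 - measure_pmf.expectation L ?reject)"
    by (intro add_mono IH mult_left_mono threshold vx)
  finally show ?case unfolding expectation_split .
qed simp

lemma set_offer_order [simp]: "finite A \<Longrightarrow> set (offer_order v A) = A"
  and distinct_offer_order [simp]: "distinct (offer_order v A)"
  and length_offer_order [simp]: "length (offer_order v A) = card A"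
  by (simp_all add: offer_order_def)

lemma sorted_wrt_offer_order: "sorted_wrt (\<lambda>a b. v b \<le> v a) (offer_order v A)"
  using sorted_sort_key[of "\<lambda>i. - v i" "sorted_list_of_set A"]
  unfolding offer_order_def by (simp add: sorted_map)

lemma offer_order_restrict:
  "offer_order v {i. i < n \<and> P i} = filter P (offer_order v {..<n})"
proof -
  have "sorted_list_of_set {i. i < n \<and> P i} = filter P (sorted_list_of_set {..<n})"
    by (rule sorted_distinct_set_unique) (auto simp: sorted_wrt_filter)
  then show ?thesis unfolding offer_order_def by (simp add: filter_sort)
qed

lemma gkps_card_list_le:
  assumes gkps: "gkps_rounding n k y Y" and "Z \<in> set_pmf Y" and "j < k"
    and "(\<Sum>i<n. y i j) \<le> real T"
  shows "card {i. i < n \<and> Z i j} \<le> T"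
proof -
  let ?s = "\<Sum>i<n. y i j"
  have "\<forall>Z\<in>set_pmf Y. \<forall>j<k. real (card {i. i < n \<and> Z i j}) \<in>
          {of_int \<lfloor>\<Sum>i<n. y i j\<rfloor>, of_int \<lceil>\<Sum>i<n. y i j\<rceil>}"
    using gkps unfolding gkps_rounding_def by (elim conjE) blast
  then have "real (card {i. i < n \<and> Z i j}) \<in> {of_int \<lfloor>?s\<rfloor>, of_int \<lceil>?s\<rceil>}"
    using assms(2,3) by blast
  then have "real (card {i. i < n \<and> Z i j}) \<le> of_int \<lceil>?s\<rceil>"
    using floor_le_ceiling[of ?s] by auto
  also have "\<dots> \<le> real T"
    using assms(4) by (metis ceiling_le_iff of_int_le_iff of_int_of_nat_eq)
  finally show ?thesis by simp
qed

lemma gkps_all_absent_le: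
  assumes gkps: "gkps_rounding n k y Y" and "j < k" and "B \<subseteq> {..<n}"
  shows "measure_pmf.prob Y {Z. \<forall>i\<in>B. \<not> Z i j} \<le> (\<Prod>i\<in>B. 1 - y i j)"
proof -
  have marginal: "\<forall>i<n. \<forall>j<k. measure_pmf.prob Y {Z. Z i j} = y i j"
    using gkps unfolding gkps_rounding_def by (elim conjE) blast
  have negative_correlation: "\<forall>j<k. \<forall>S\<subseteq>{..<n}. \<forall>b. measure_pmf.prob Y {Z. \<forall>i\<in>S. Z i j = b}
                                  \<le> (\<Prod>i\<in>S. measure_pmf.prob Y {Z. Z i j = b})"
    using gkps unfolding gkps_rounding_def by (elim conjE) blast
  have "measure_pmf.prob Y {Z. \<forall>i\<in>B. Z i j = False}
          \<le> (\<Prod>i\<in>B. measure_pmf.prob Y {Z. Z i j = False})"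
    using negative_correlation assms(2,3) by blast
  also have "\<dots> = (\<Prod>i\<in>B. 1 - y i j)"
  proof (rule prod.cong)
    fix i assume "i \<in> B"
    have "{Z. Z i j = False} = space (measure_pmf Y) - {Z. Z i j}" by auto
    then show "measure_pmf.prob Y {Z. Z i j = False} = 1 - y i j"
      using measure_pmf.prob_compl[of "{Z. Z i j}" Y] marginal assms(2,3) \<open>i \<in> B\<close> by auto
  qed simp
  finally show ?thesis by simp
qed

lemma expectation_position_reward_ge:
  assumes gkps: "gkps_rounding n k y Y" and feasible: "lp_par_feasible n k T p y" and j: "j < k"
    and p: "\<forall>i<n. 0 \<le> p i \<and> p i \<le> 1" and v: "\<forall>i<n. 0 \<le> v i"
  shows "(1 - 1 / exp 1) * (\<Sum>i<n. v i * p i * y i j)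
           \<le> measure_pmf.expectation Y
                (\<lambda>Z. pos_val p v (take T (offer_order v {i. i < n \<and> Z i j})))"
proof -
  define xs where "xs = offer_order v {..<n}"
  define L where "L = map_pmf (\<lambda>Z. {i. Z i j}) Y"
  have y: "\<forall>i<n. 0 \<le> y i j" "(\<Sum>i<n. y i j) \<le> real T" "(\<Sum>i<n. p i * y i j) \<le> 1"
    using feasible j unfolding lp_par_feasible_def by auto
  have absent: "measure_pmf.prob L {S. B \<inter> S = {}} \<le> (\<Prod>i\<in>B. 1 - y i j)"
    if "B \<subseteq> {..<n}" for B
  proof -
    have "(\<lambda>Z. {i. Z i j}) -` {S. B \<inter> S = {}} = {Z. \<forall>i\<in>B. \<not> Z i j}" by auto
    then show ?thesis
      unfolding L_def measure_map_pmf using gkps_all_absent_le[OF gkps j that] by simp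
  qed
  have "(1 - 1 / exp 1) * (\<Sum>i<n. v i * p i * y i j)
          \<le> measure_pmf.expectation L (\<lambda>S. pos_val p v (filter (\<lambda>i. i \<in> S) xs))"
    using expectation_pos_val_filter_ge[of xs v p "\<lambda>i. y i j" L] p v y absent
    by (simp add: xs_def sorted_wrt_offer_order)
  also have "\<dots> = measure_pmf.expectation Y (\<lambda>Z. pos_val p v (filter (\<lambda>i. Z i j) xs))"
    by (simp add: L_def)
  also have "\<dots> = measure_pmf.expectation Y
                     (\<lambda>Z. pos_val p v (take T (offer_order v {i. i < n \<and> Z i j})))"
  proof (rule integral_cong_AE)
    show "AE Z in measure_pmf Y. pos_val p v (filter (\<lambda>i. Z i j) xs)
            = pos_val p v (take T (offer_order v {i. i < n \<and> Z i j}))"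
      using gkps_card_list_le[OF gkps _ j y(2)]
      by (auto simp: AE_measure_pmf_iff xs_def offer_order_restrict[symmetric])
  qed simp_all
  finally show ?thesis .
qed

theorem corollary5p1:
  fixes n k T :: nat and p v :: "nat \<Rightarrow> real"
    and y :: "nat \<Rightarrow> nat \<Rightarrow> real" and Y :: "(nat \<Rightarrow> nat \<Rightarrow> bool) pmf"
  assumes "1 \<le> k" and "1 \<le> T"
    and "\<forall>i<n. 0 \<le> p i \<and> p i \<le> 1"
    and "\<forall>i<n. 0 \<le> v i"
    and "lp_par_optimal n k T p v y"
    and "gkps_rounding n k y Y"
  shows "measure_pmf.expectation Y (alg_par_reward n k T p v)
           \<ge> (1 - 1 / exp 1) * opt_seq n k (k * T) p v"
proof -
  let ?c = "1 - 1 / exp 1 :: real"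
  have feasible: "lp_par_feasible n k T p y"
    using assms(5) unfolding lp_par_optimal_def by blast
  have "?c * opt_seq n k (k * T) p v \<le> ?c * lp_par_obj n k p v y"
    by (intro mult_left_mono opt_seq_le_lp_par_obj assms(1,3,5)) simp
  also have "\<dots> = (\<Sum>j<k. ?c * (\<Sum>i<n. v i * p i * y i j))"
    unfolding lp_par_obj_def by (simp add: sum_distrib_left)
  also have "\<dots> \<le> (\<Sum>j<k. measure_pmf.expectation Y
                     (\<lambda>Z. pos_val p v (take T (offer_order v {i. i < n \<and> Z i j}))))"
    using assms(3,4,6) feasible by (intro sum_mono expectation_position_reward_ge) auto
  also have "\<dots> = measure_pmf.expectation Y (alg_par_reward n k T p v)"
    using assms(3) unfolding alg_par_reward_def
    by (subst Bochner_Integration.integral_sum)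
      (auto intro!: integrable_pos_val[where A = "{..<n}"] dest: in_set_takeD)
  finally show ?thesis .
qed

end
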